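(* Let $X$ be a real Banach space with a normalized Schauder basis $\mathcal B=(e_n)_{n=1}^\infty$ with biorthogonal functionals $(e_n^* )$ which is unconditional or boundedly complete, and let $\mathcal E=(\varepsilon_n)_{n=1}^\infty$ be a sequence of nonnegative numbers. If the brick $K_{\mathcal B,\mathcal E}$ has finite extreme radius, then $K_{\mathcal B,\mathcal E}$ is compact.
   Context: The brick is $K_{\mathcal B,\mathcal E}=\{x\in X:\ |e_n^*(x)|\le\varepsilon_n \text{ for all } n\}$. A point $x_0\in A$ is an extreme point of $A$ if for every nonzero $x\in X$ there is $\lambda\in[-1,1]$ with $x_0+\lambda x\notin A$. The extreme radius of $K$ is the supremum of $\|x_0\|$ over extreme points $x_0$ of $K$ if an extreme point exists, and $\infty$ otherwise. A basis is unconditional if $\sum_ne_n^*(x)e_n$ converges unconditionally for every $x$; it is boundedly complete if $\sup_n\|\sum_{k=1}^na_ke_k\|<\infty$ implies convergence of $\sum_na_ne_n$. *)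

theory Defs
  imports "HOL-Analysis.Analysis"
begin

text \<open>Schauder basis (indexed from 0): every vector has a unique expansion
  x = sum_n a_n e_n (norm convergence of partial sums).\<close>
definition schauder_basis :: "(nat \<Rightarrow> 'a::real_normed_vector) \<Rightarrow> bool" where
  "schauder_basis e \<longleftrightarrow> (\<forall>x. \<exists>!a::nat \<Rightarrow> real. (\<lambda>n. a n *\<^sub>R e n) sums x)"

definition coord :: "(nat \<Rightarrow> 'a::real_normed_vector) \<Rightarrow> nat \<Rightarrow> 'a \<Rightarrow> real" where
  "coord e n x = (THE a::nat \<Rightarrow> real. (\<lambda>k. a k *\<^sub>R e k) sums x) n"

definition normalized_basis :: "(nat \<Rightarrow> 'a::real_normed_vector) \<Rightarrow> bool" where
  "normalized_basis e \<longleftrightarrow> (\<forall>n. norm (e n) = 1)"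

text \<open>Unconditional: the expansion converges unconditionally for every x
  (summable_on over nat = convergence of the net of finite partial sums).\<close>
definition unconditional_basis :: "(nat \<Rightarrow> 'a::real_normed_vector) \<Rightarrow> bool" where
  "unconditional_basis e \<longleftrightarrow> (\<forall>x. (\<lambda>n. coord e n x *\<^sub>R e n) summable_on UNIV)"

definition boundedly_complete :: "(nat \<Rightarrow> 'a::real_normed_vector) \<Rightarrow> bool" where
  "boundedly_complete e \<longleftrightarrow>
     (\<forall>a::nat \<Rightarrow> real. bounded (range (\<lambda>N. \<Sum>k<N. a k *\<^sub>R e k)) \<longrightarrow> summable (\<lambda>n. a n *\<^sub>R e n))"

definition brick :: "(nat \<Rightarrow> 'a::real_normed_vector) \<Rightarrow> (nat \<Rightarrow> real) \<Rightarrow> 'a set" where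
  "brick e \<epsilon> = {x. \<forall>n. \<bar>coord e n x\<bar> \<le> \<epsilon> n}"

definition is_extreme_pt :: "'a::real_vector set \<Rightarrow> 'a \<Rightarrow> bool" where
  "is_extreme_pt A x0 \<longleftrightarrow> x0 \<in> A \<and> (\<forall>x. x \<noteq> 0 \<longrightarrow> (\<exists>t\<in>{-1..1::real}. x0 + t *\<^sub>R x \<notin> A))"

definition extreme_radius :: "'a::real_normed_vector set \<Rightarrow> ereal" where
  "extreme_radius A = (if \<exists>x0. is_extreme_pt A x0
      then (SUP x0\<in>{x0. is_extreme_pt A x0}. ereal (norm x0)) else \<infinity>)"

end

theory Submission
  imports Defs
begin

text \<open>
  The extreme points of the brick are exactly the vectors x with |e_n^*(x)| = \<epsilon>_n for all n.
  Finite extreme radius therefore provides one such point x0 and a bound R on the norms of all of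
  them. For every sign change t of the coordinates of x0 the series \<Sum> t_n e_n converges: for an
  unconditional basis because it splits into two subseries of the expansion of x0, for a boundedly
  complete basis because its N-th partial sum differs from the extreme point that follows t before N
  and x0 afterwards by a bounded amount. Gluing bad blocks of different sign sequences into one shows
  that these series have uniformly small tails; convexity of the norm extends this to all coefficient
  sequences with |t_n| \<le> \<epsilon>_n. Hence a coordinatewise convergent subsequence of any sequence in
  the brick converges in norm.
\<close>

lemma coord_sums:
  assumes "schauder_basis e"
  shows "(\<lambda>n. coord e n x *\<^sub>R e n) sums x"
proof -
  from assms have "\<exists>!a. (\<lambda>n. a n *\<^sub>R e n) sums x"
    unfolding schauder_basis_def by blast
  from theI'[OF this] show ?thesis
    unfolding coord_def by simp
qed

lemma coord_eqI:
  assumes "schauder_basis e" "(\<lambda>n. a n *\<^sub>R e n) sums x"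
  shows "coord e n x = a n"
proof -
  from assms(1) have "\<exists>!a. (\<lambda>n. a n *\<^sub>R e n) sums x"
    unfolding schauder_basis_def by blast
  with assms(2) show ?thesis
    unfolding coord_def by (simp add: the1_equality)
qed

lemma coord_add_scaleR:
  assumes "schauder_basis e"
  shows "coord e n (x + t *\<^sub>R z) = coord e n x + t * coord e n z"
proof -
  have "(\<lambda>n. (coord e n x + t * coord e n z) *\<^sub>R e n) sums (x + t *\<^sub>R z)"
    using sums_add[OF coord_sums[OF assms] sums_scaleR_right[OF coord_sums[OF assms]]]
    by (simp add: scaleR_add_left)
  then show ?thesis
    by (rule coord_eqI[OF assms])
qed

lemma coord_basis:
  assumes "schauder_basis e"
  shows "coord e n (e m) = (if n = m then 1 else 0)"
proof -
  have "(\<lambda>k. (if k = m then 1 else 0) *\<^sub>R e k) = (\<lambda>k. if k = m then e k else 0)"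
    by auto
  then have "(\<lambda>k. (if k = m then 1 else 0) *\<^sub>R e k) sums e m"
    using sums_single[of m e] by simp
  then show ?thesis
    by (rule coord_eqI[OF assms])
qed

lemma eq_0_if_coord_eq_0:
  assumes "schauder_basis e" "\<And>n. coord e n x = 0"
  shows "x = 0"
  using coord_sums[OF assms(1), of x] assms(2) sums_unique sums_zero by fastforce

section \<open>Extreme points of the brick\<close>

lemma coord_abs_eq_if_extreme_pt_brick:
  assumes e: "schauder_basis e" "\<And>n. e n \<noteq> 0"
    and x: "is_extreme_pt (brick e \<epsilon>) x"
  shows "\<bar>coord e n x\<bar> = \<epsilon> n"
proof (rule ccontr)
  assume "\<bar>coord e n x\<bar> \<noteq> \<epsilon> n"
  have le: "\<bar>coord e m x\<bar> \<le> \<epsilon> m" for m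
    using x unfolding is_extreme_pt_def brick_def by blast
  define d where "d = \<epsilon> n - \<bar>coord e n x\<bar>"
  have "d > 0"
    using le[of n] \<open>\<bar>coord e n x\<bar> \<noteq> \<epsilon> n\<close> unfolding d_def by linarith
  then have "d *\<^sub>R e n \<noteq> 0"
    using e(2) by simp
  then obtain t where t: "t \<in> {-1..1}" "x + t *\<^sub>R (d *\<^sub>R e n) \<notin> brick e \<epsilon>"
    using x unfolding is_extreme_pt_def by blast
  have "\<bar>coord e m (x + t *\<^sub>R (d *\<^sub>R e n))\<bar> \<le> \<epsilon> m" for m
  proof -
    have "coord e m (x + t *\<^sub>R (d *\<^sub>R e n)) = coord e m x + (if m = n then t * d else 0)"
      using coord_add_scaleR[OF e(1), of m x "t * d" "e n"] coord_basis[OF e(1), of m n] by simp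
    moreover have "\<bar>t * d\<bar> \<le> d"
      using t(1) \<open>d > 0\<close> by (simp add: abs_mult mult_le_cancel_right1 abs_le_iff)
    ultimately show ?thesis
      using le[of m] unfolding d_def by auto
  qed
  with t(2) show False
    unfolding brick_def by blast
qed

lemma is_extreme_pt_brickI:
  assumes e: "schauder_basis e" and x: "\<And>n. \<bar>coord e n x\<bar> = \<epsilon> n"
  shows "is_extreme_pt (brick e \<epsilon>) x"
  unfolding is_extreme_pt_def
proof (intro conjI allI impI)
  show "x \<in> brick e \<epsilon>"
    using x unfolding brick_def by simp
  fix z :: 'a
  assume "z \<noteq> 0"
  then obtain n where "coord e n z \<noteq> 0"
    using eq_0_if_coord_eq_0[OF e] by blast
  then obtain t :: real where t: "t \<in> {-1, 1}" "\<bar>coord e n x + t * coord e n z\<bar> > \<epsilon> n"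
    using x[of n] by (cases "coord e n x \<ge> 0"; cases "coord e n z > 0"; force simp: abs_if)
  then have "x + t *\<^sub>R z \<notin> brick e \<epsilon>"
    unfolding brick_def by (auto simp: coord_add_scaleR[OF e] not_le)
  with t(1) show "\<exists>t\<in>{-1..1}. x + t *\<^sub>R z \<notin> brick e \<epsilon>"
    by auto
qed

lemma extreme_radius_less_infinity_bounded:
  assumes "extreme_radius A < \<infinity>"
  obtains x0 R where "is_extreme_pt A x0" "\<And>x. is_extreme_pt A x \<Longrightarrow> norm x \<le> R"
proof -
  have ex: "\<exists>x0. is_extreme_pt A x0"
    using assms unfolding extreme_radius_def by (auto split: if_splits)
  then have "(SUP x\<in>{x. is_extreme_pt A x}. ereal (norm x)) \<noteq> \<infinity>"
    using assms unfolding extreme_radius_def by simp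
  then obtain n :: nat where n: "(SUP x\<in>{x. is_extreme_pt A x}. ereal (norm x)) < ereal (real n)"
    using less_PInf_Ex_of_nat by blast
  have "norm x \<le> real n" if "is_extreme_pt A x" for x
  proof -
    have "ereal (norm x) \<le> (SUP x\<in>{x. is_extreme_pt A x}. ereal (norm x))"
      using that by (intro SUP_upper) simp
    then have "ereal (norm x) < ereal (real n)"
      using n by (rule le_less_trans)
    then show ?thesis
      by simp
  qed
  with ex that show ?thesis
    by blast
qed

section \<open>Convergence of sign changes of an expansion\<close>

lemma summable_if_abs_eq_summable_on:
  fixes v :: "nat \<Rightarrow> 'a::banach"
  assumes c: "(\<lambda>n. c n *\<^sub>R v n) summable_on UNIV" and t: "\<And>n. \<bar>t n\<bar> = \<bar>c n\<bar>"
  shows "summable (\<lambda>n. t n *\<^sub>R v n)"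
proof -
  define P where "P = {n. t n = c n}"
  have "(\<lambda>n. c n *\<^sub>R v n) summable_on P"
    using summable_on_subset_banach[OF c] by blast
  then have "(\<lambda>n. t n *\<^sub>R v n) summable_on P"
    by (rule summable_on_cong[THEN iffD1, rotated]) (simp add: P_def)
  moreover have "(\<lambda>n. - (c n *\<^sub>R v n)) summable_on -P"
    using summable_on_subset_banach[OF c] by (simp add: summable_on_uminus)
  then have "(\<lambda>n. t n *\<^sub>R v n) summable_on -P"
  proof (rule summable_on_cong[THEN iffD1, rotated])
    fix n assume "n \<in> -P"
    then have "t n = - c n"
      using t[of n] by (auto simp: P_def abs_if split: if_splits)
    then show "- (c n *\<^sub>R v n) = t n *\<^sub>R v n"
      by simp
  qed
  ultimately have "(\<lambda>n. t n *\<^sub>R v n) summable_on (P \<union> -P)"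
    by (intro summable_on_Un_disjoint) auto
  then show ?thesis
    by (intro summable_on_imp_summable) simp
qed

lemma summable_modify_initial:
  fixes v :: "nat \<Rightarrow> 'a::real_normed_vector"
  assumes c: "summable (\<lambda>k. c k *\<^sub>R v k)"
  shows "summable (\<lambda>k. (if k < N then t k else c k) *\<^sub>R v k)"
    and "(\<Sum>k. (if k < N then t k else c k) *\<^sub>R v k) - (\<Sum>k<N. t k *\<^sub>R v k) =
           (\<Sum>k. c k *\<^sub>R v k) - (\<Sum>k<N. c k *\<^sub>R v k)"
proof -
  define h where "h k = (if k < N then t k else c k)" for k
  have tail: "(\<lambda>k. h (k + N) *\<^sub>R v (k + N)) = (\<lambda>k. c (k + N) *\<^sub>R v (k + N))"
    by (simp add: h_def)
  have sh: "summable (\<lambda>k. h k *\<^sub>R v k)"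
    using c summable_iff_shift[of "\<lambda>k. h k *\<^sub>R v k" N] summable_iff_shift[of "\<lambda>k. c k *\<^sub>R v k" N]
    by (simp add: tail)
  then show "summable (\<lambda>k. (if k < N then t k else c k) *\<^sub>R v k)"
    by (simp add: h_def)
  show "(\<Sum>k. (if k < N then t k else c k) *\<^sub>R v k) - (\<Sum>k<N. t k *\<^sub>R v k) =
          (\<Sum>k. c k *\<^sub>R v k) - (\<Sum>k<N. c k *\<^sub>R v k)"
    using suminf_split_initial_segment[OF sh, of N] suminf_split_initial_segment[OF c, of N]
    unfolding h_def[symmetric] by (simp add: tail h_def)
qed

lemma summable_if_abs_eq_boundedly_complete:
  fixes v :: "nat \<Rightarrow> 'a::real_normed_vector"
  assumes bc: "boundedly_complete v" and c: "summable (\<lambda>n. c n *\<^sub>R v n)"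
    and R: "\<And>s. (\<forall>n. \<bar>s n\<bar> = \<bar>c n\<bar>) \<Longrightarrow> summable (\<lambda>n. s n *\<^sub>R v n) \<Longrightarrow>
              norm (\<Sum>n. s n *\<^sub>R v n) \<le> R"
    and t: "\<And>n. \<bar>t n\<bar> = \<bar>c n\<bar>"
  shows "summable (\<lambda>n. t n *\<^sub>R v n)"
proof -
  have "Bseq (\<lambda>N. \<Sum>k<N. c k *\<^sub>R v k)"
    using c by (simp add: summable_iff_convergent convergent_imp_Bseq)
  then obtain C where C: "\<And>N. norm (\<Sum>k<N. c k *\<^sub>R v k) \<le> C"
    by (rule BseqE) blast
  have "norm (\<Sum>k<N. t k *\<^sub>R v k) \<le> R + norm (\<Sum>n. c n *\<^sub>R v n) + C" for N
  proof -
    define h where "h k = (if k < N then t k else c k)" for k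
    have sh: "summable (\<lambda>k. h k *\<^sub>R v k)"
      and eq: "(\<Sum>k. h k *\<^sub>R v k) - (\<Sum>k<N. t k *\<^sub>R v k) = (\<Sum>k. c k *\<^sub>R v k) - (\<Sum>k<N. c k *\<^sub>R v k)"
      using summable_modify_initial[OF c, of N t] by (simp_all add: h_def)
    have "norm (\<Sum>k<N. t k *\<^sub>R v k) =
          norm ((\<Sum>k. h k *\<^sub>R v k) - (\<Sum>k. c k *\<^sub>R v k) + (\<Sum>k<N. c k *\<^sub>R v k))"
      using eq by (simp add: algebra_simps)
    also have "\<dots> \<le> norm (\<Sum>k. h k *\<^sub>R v k) + norm (\<Sum>k. c k *\<^sub>R v k) + norm (\<Sum>k<N. c k *\<^sub>R v k)"
      by (meson add_right_mono norm_triangle_ineq norm_triangle_ineq4 order_trans)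
    also have "\<dots> \<le> R + norm (\<Sum>k. c k *\<^sub>R v k) + C"
      using R[OF _ sh] t C[of N] by (simp add: h_def add_mono)
    finally show ?thesis .
  qed
  then have "bounded (range (\<lambda>N. \<Sum>k<N. t k *\<^sub>R v k))"
    unfolding bounded_iff by blast
  with bc show ?thesis
    unfolding boundedly_complete_def by blast
qed

lemma summable_sign_series:
  fixes e :: "nat \<Rightarrow> 'a::banach"
  assumes e: "schauder_basis e" and basis: "unconditional_basis e \<or> boundedly_complete e"
    and x0: "\<And>n. \<bar>coord e n x0\<bar> = \<epsilon> n"
    and R: "\<And>x. is_extreme_pt (brick e \<epsilon>) x \<Longrightarrow> norm x \<le> R"
    and t: "\<forall>n. \<bar>t n\<bar> = \<epsilon> n"
  shows "summable (\<lambda>n. t n *\<^sub>R e n)"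
  using basis
proof
  assume "unconditional_basis e"
  then show ?thesis
    using t x0 unfolding unconditional_basis_def
    by (intro summable_if_abs_eq_summable_on[of "\<lambda>n. coord e n x0"]) auto
next
  assume "boundedly_complete e"
  then show ?thesis
  proof (rule summable_if_abs_eq_boundedly_complete)
    show "summable (\<lambda>n. coord e n x0 *\<^sub>R e n)"
      using coord_sums[OF e] by (rule sums_summable)
    show "norm (\<Sum>n. s n *\<^sub>R e n) \<le> R"
      if "\<forall>n. \<bar>s n\<bar> = \<bar>coord e n x0\<bar>" "summable (\<lambda>n. s n *\<^sub>R e n)" for s
      using that x0 by (intro R is_extreme_pt_brickI[OF e]) (simp add: coord_eqI[OF e summable_sums])
  qed (use t x0 in auto)
qed

section \<open>Uniformly small tails\<close>

definition uniform_tails :: "(nat \<Rightarrow> 'a::real_normed_vector) \<Rightarrow> (nat \<Rightarrow> real) set \<Rightarrow> bool" where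
  "uniform_tails v T \<longleftrightarrow> (\<forall>\<delta>>0. \<exists>N. \<forall>t\<in>T. \<forall>m\<ge>N. \<forall>L. norm (\<Sum>k\<in>{m..<L}. t k *\<^sub>R v k) \<le> \<delta>)"

lemma strict_mono_blocks:
  fixes M L :: "nat \<Rightarrow> nat"
  assumes "\<And>N. N \<le> M N" "\<And>N. M N < L N"
  obtains b J :: "nat \<Rightarrow> nat" where "strict_mono b" "\<And>j k. M (b j) \<le> k \<Longrightarrow> k < L (b j) \<Longrightarrow> J k = j"
proof -
  define b where "b = rec_nat 0 (\<lambda>_. L)"
  have b_Suc: "b (Suc j) = L (b j)" for j
    by (simp add: b_def)
  have mono: "strict_mono b"
    unfolding strict_mono_Suc_iff using assms b_Suc by (metis le_less_trans)
  have "(GREATEST i. b i \<le> k) = j" if "M (b j) \<le> k" "k < L (b j)" for j k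
  proof (rule Greatest_equality)
    show "b j \<le> k"
      using that assms(1)[of "b j"] by linarith
    show "i \<le> j" if "b i \<le> k" for i
      using \<open>b i \<le> k\<close> \<open>k < L (b j)\<close> mono b_Suc
      by (metis not_less_eq_eq order_trans strict_mono_less_eq leD)
  qed
  with mono show ?thesis
    by (rule that)
qed

lemma uniform_tails_signs:
  fixes v :: "nat \<Rightarrow> 'a::banach"
  assumes summable: "\<And>t. \<forall>n. \<bar>t n\<bar> = \<epsilon> n \<Longrightarrow> summable (\<lambda>n. t n *\<^sub>R v n)"
  shows "uniform_tails v {t. \<forall>n. \<bar>t n\<bar> = \<epsilon> n}"
  unfolding uniform_tails_def
proof (intro allI impI, rule ccontr)
  fix \<delta> :: real
  assume "\<delta> > 0" and "\<nexists>N. \<forall>t\<in>{t. \<forall>n. \<bar>t n\<bar> = \<epsilon> n}. \<forall>m\<ge>N. \<forall>L. norm (\<Sum>k\<in>{m..<L}. t k *\<^sub>R v k) \<le> \<delta>"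
  then have "\<forall>N. \<exists>t m L. (\<forall>n. \<bar>t n\<bar> = \<epsilon> n) \<and> N \<le> m \<and> norm (\<Sum>k\<in>{m..<L}. t k *\<^sub>R v k) > \<delta>"
    by (auto simp: not_le)
  then obtain T M L where T: "\<And>N n. \<bar>T N n\<bar> = \<epsilon> n" and M: "\<And>N. N \<le> M N"
    and block: "\<And>N. norm (\<Sum>k\<in>{M N..<L N}. T N k *\<^sub>R v k) > \<delta>"
    by metis
  have "M N < L N" for N
    using block[of N] \<open>\<delta> > 0\<close> by (cases "M N < L N") auto
  then obtain b J :: "nat \<Rightarrow> nat" where b: "strict_mono b" and J: "\<And>j k. M (b j) \<le> k \<Longrightarrow> k < L (b j) \<Longrightarrow> J k = j"
    using strict_mono_blocks M by metis
  \<comment> \<open>gluing the bad blocks of T (b 0), T (b 1), ... gives a sign sequence whose series is not Cauchy\<close>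
  define s where "s k = T (b (J k)) k" for k
  have "summable (\<lambda>k. s k *\<^sub>R v k)"
    using T by (intro summable) (simp add: s_def)
  then obtain N where N: "\<And>m n. N \<le> m \<Longrightarrow> norm (\<Sum>k\<in>{m..<n}. s k *\<^sub>R v k) < \<delta>"
    using \<open>\<delta> > 0\<close> unfolding summable_Cauchy by blast
  have "N \<le> M (b N)"
    using seq_suble[OF b, of N] M[of "b N"] by linarith
  moreover have "(\<Sum>k\<in>{M (b N)..<L (b N)}. s k *\<^sub>R v k) = (\<Sum>k\<in>{M (b N)..<L (b N)}. T (b N) k *\<^sub>R v k)"
    by (intro sum.cong) (auto simp: s_def J)
  ultimately show False
    using N[of "M (b N)" "L (b N)"] block[of "b N"] by simp
qed

lemma norm_segment_le_max:
  fixes z v :: "'a::real_normed_vector"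
  assumes "\<bar>t\<bar> \<le> a"
  shows "norm (z + t *\<^sub>R v) \<le> max (norm (z - a *\<^sub>R v)) (norm (z + a *\<^sub>R v))"
proof -
  have "convex_on {-a..a} (\<lambda>s. norm (z + s *\<^sub>R v))"
    unfolding convex_on_def
  proof (intro conjI ballI allI impI)
    fix x y u w :: real
    assume "0 \<le> u" "0 \<le> w" "u + w = 1"
    then have "z + (u * x + w * y) *\<^sub>R v = u *\<^sub>R (z + x *\<^sub>R v) + w *\<^sub>R (z + y *\<^sub>R v)"
      by (simp add: algebra_simps flip: scaleR_add_left)
    then show "norm (z + (u *\<^sub>R x + w *\<^sub>R y) *\<^sub>R v) \<le> u * norm (z + x *\<^sub>R v) + w * norm (z + y *\<^sub>R v)"
      using norm_triangle_ineq[of "u *\<^sub>R (z + x *\<^sub>R v)" "w *\<^sub>R (z + y *\<^sub>R v)"] \<open>0 \<le> u\<close> \<open>0 \<le> w\<close>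
      by simp
  qed simp
  moreover have "t \<in> {-a..a}"
    using assms by (simp add: abs_le_iff)
  ultimately show ?thesis
    using convex_on_le_max by fastforce
qed

lemma ex_signs_norm_sum_ge:
  fixes v :: "nat \<Rightarrow> 'a::real_normed_vector"
  assumes "finite F" "\<And>n. \<bar>t n\<bar> \<le> \<epsilon> n" "\<And>n. \<epsilon> n \<ge> 0"
  shows "\<exists>s. (\<forall>n. \<bar>s n\<bar> = \<epsilon> n) \<and> norm (w + (\<Sum>n\<in>F. t n *\<^sub>R v n)) \<le> norm (w + (\<Sum>n\<in>F. s n *\<^sub>R v n))"
  using assms(1)
proof (induction F arbitrary: w rule: finite_induct)
  case empty
  show ?case
    using assms(3) by (intro exI[of _ \<epsilon>]) simp
next
  case (insert n F)
  obtain s where s: "\<forall>k. \<bar>s k\<bar> = \<epsilon> k"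
    "norm ((w + t n *\<^sub>R v n) + (\<Sum>k\<in>F. t k *\<^sub>R v k)) \<le> norm ((w + t n *\<^sub>R v n) + (\<Sum>k\<in>F. s k *\<^sub>R v k))"
    using insert.IH by blast
  define z where "z = w + (\<Sum>k\<in>F. s k *\<^sub>R v k)"
  have "norm (z + t n *\<^sub>R v n) \<le> norm (z + (- \<epsilon> n) *\<^sub>R v n) \<or>
        norm (z + t n *\<^sub>R v n) \<le> norm (z + \<epsilon> n *\<^sub>R v n)"
    using norm_segment_le_max[OF assms(2)[of n], of z "v n"] by (simp add: le_max_iff_disj)
  then obtain \<sigma> where \<sigma>: "\<bar>\<sigma>\<bar> = \<epsilon> n" "norm (z + t n *\<^sub>R v n) \<le> norm (z + \<sigma> *\<^sub>R v n)"
    using assms(3)[of n] by (metis abs_minus_cancel abs_of_nonneg)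
  define s' where "s' = s(n := \<sigma>)"
  have "(\<Sum>k\<in>F. s' k *\<^sub>R v k) = (\<Sum>k\<in>F. s k *\<^sub>R v k)"
    using insert.hyps(2) unfolding s'_def by (intro sum.cong) auto
  then have "norm (w + (\<Sum>k\<in>insert n F. t k *\<^sub>R v k)) \<le> norm (w + (\<Sum>k\<in>insert n F. s' k *\<^sub>R v k))"
    using insert.hyps s(2) \<sigma>(2) by (simp add: z_def s'_def algebra_simps)
  moreover have "\<forall>k. \<bar>s' k\<bar> = \<epsilon> k"
    using s(1) \<sigma>(1) unfolding s'_def by auto
  ultimately show ?case
    by blast
qed

lemma uniform_tails_box_if_signs:
  assumes "\<And>n. \<epsilon> n \<ge> 0" "uniform_tails v {t. \<forall>n. \<bar>t n\<bar> = \<epsilon> n}"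
  shows "uniform_tails v {t. \<forall>n. \<bar>t n\<bar> \<le> \<epsilon> n}"
  unfolding uniform_tails_def
proof (intro allI impI)
  fix \<delta> :: real
  assume "\<delta> > 0"
  then obtain N where N: "\<And>s m L. \<forall>n. \<bar>s n\<bar> = \<epsilon> n \<Longrightarrow> m \<ge> N \<Longrightarrow> norm (\<Sum>k\<in>{m..<L}. s k *\<^sub>R v k) \<le> \<delta>"
    using assms(2) unfolding uniform_tails_def by blast
  have "norm (\<Sum>k\<in>{m..<L}. t k *\<^sub>R v k) \<le> \<delta>" if "\<forall>n. \<bar>t n\<bar> \<le> \<epsilon> n" "m \<ge> N" for t m L
    using ex_signs_norm_sum_ge[of "{m..<L}" t \<epsilon> 0 v] N[OF _ \<open>m \<ge> N\<close>] assms(1) that(1)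
    by (force intro: order_trans)
  then show "\<exists>N. \<forall>t\<in>{t. \<forall>n. \<bar>t n\<bar> \<le> \<epsilon> n}. \<forall>m\<ge>N. \<forall>L. norm (\<Sum>k\<in>{m..<L}. t k *\<^sub>R v k) \<le> \<delta>"
    by blast
qed

lemma convergent_subseq_if_abs_le:
  fixes u :: "nat \<Rightarrow> nat \<Rightarrow> real"
  assumes "\<And>j n. \<bar>u j n\<bar> \<le> \<epsilon> n"
  obtains r a where "strict_mono r" "\<And>n. \<bar>a n\<bar> \<le> \<epsilon> n" "\<And>n. (\<lambda>j. u (r j) n) \<longlonglongrightarrow> a n"
proof -
  define S where "S = PiE UNIV (\<lambda>n. {-\<epsilon> n..\<epsilon> n})"
  have "compactin (product_topology (\<lambda>_. euclidean) UNIV) S"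
    unfolding S_def by (subst compactin_PiE) auto
  then have "compact S"
    by (simp add: euclidean_product_topology)
  moreover have "u j \<in> S" for j
    using assms by (auto simp: S_def abs_le_iff minus_le_iff)
  ultimately obtain a r where a: "a \<in> S" "strict_mono r" "(u \<circ> r) \<longlonglongrightarrow> a"
    using compact_imp_seq_compact seq_compactE by metis
  have "(\<lambda>j. u (r j) n) \<longlonglongrightarrow> a n" for n
  proof -
    have "continuous_on UNIV (\<lambda>x::nat \<Rightarrow> real. x n)"
      by simp
    then have "isCont (\<lambda>x::nat \<Rightarrow> real. x n) a"
      by (metis continuous_on_eq_continuous_at open_UNIV UNIV_I)
    from isCont_tendsto_compose[OF this a(3)] show ?thesis
      by (simp add: o_def)
  qed
  moreover have "\<bar>a n\<bar> \<le> \<epsilon> n" for n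
    using a(1) by (auto simp: S_def abs_le_iff minus_le_iff)
  ultimately show ?thesis
    using a(2) that by blast
qed

lemma norm_sums_minus_sum_le:
  fixes f :: "nat \<Rightarrow> 'a::real_normed_vector"
  assumes "f sums z" "\<And>m L. N \<le> m \<Longrightarrow> norm (\<Sum>k\<in>{m..<L}. f k) \<le> \<delta>"
  shows "norm (z - (\<Sum>k<N. f k)) \<le> \<delta>"
proof (rule LIMSEQ_le_const2)
  show "(\<lambda>n. norm ((\<Sum>k<n. f k) - (\<Sum>k<N. f k))) \<longlonglongrightarrow> norm (z - (\<Sum>k<N. f k))"
    using assms(1) unfolding sums_def by (intro tendsto_norm tendsto_diff tendsto_const)
  show "\<exists>M. \<forall>n\<ge>M. norm ((\<Sum>k<n. f k) - (\<Sum>k<N. f k)) \<le> \<delta>"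
  proof (intro exI allI impI)
    fix n
    assume "N \<le> n"
    then have "(\<Sum>k<n. f k) - (\<Sum>k<N. f k) = (\<Sum>k\<in>{N..<n}. f k)"
      by (simp add: sum_diff_nat_ivl lessThan_atLeast0)
    then show "norm ((\<Sum>k<n. f k) - (\<Sum>k<N. f k)) \<le> \<delta>"
      using assms(2) by simp
  qed
qed

lemma brick_approx_by_partial_sums:
  assumes e: "schauder_basis e" and tails: "uniform_tails e {t. \<forall>n. \<bar>t n\<bar> \<le> \<epsilon> n}" and "\<delta> > 0"
  obtains N where "\<And>z. z \<in> brick e \<epsilon> \<Longrightarrow> norm (z - (\<Sum>k<N. coord e k z *\<^sub>R e k)) \<le> \<delta>"
proof -
  obtain N where N: "\<And>t m L. \<forall>n. \<bar>t n\<bar> \<le> \<epsilon> n \<Longrightarrow> N \<le> m \<Longrightarrow> norm (\<Sum>k\<in>{m..<L}. t k *\<^sub>R e k) \<le> \<delta>"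
    using tails \<open>\<delta> > 0\<close> unfolding uniform_tails_def by blast
  show ?thesis
  proof (rule that)
    fix z
    assume "z \<in> brick e \<epsilon>"
    then have "\<forall>n. \<bar>coord e n z\<bar> \<le> \<epsilon> n"
      by (simp add: brick_def)
    then show "norm (z - (\<Sum>k<N. coord e k z *\<^sub>R e k)) \<le> \<delta>"
      by (intro norm_sums_minus_sum_le[OF coord_sums[OF e]] N)
  qed
qed

lemma tendsto_if_coord_tendsto_brick:
  assumes e: "schauder_basis e" and tails: "uniform_tails e {t. \<forall>n. \<bar>t n\<bar> \<le> \<epsilon> n}"
    and x: "\<And>j. x j \<in> brick e \<epsilon>" and y: "y \<in> brick e \<epsilon>"
    and coord: "\<And>n. (\<lambda>j. coord e n (x j)) \<longlonglongrightarrow> coord e n y"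
  shows "x \<longlonglongrightarrow> y"
proof (rule LIMSEQ_I)
  fix d :: real
  assume "d > 0"
  then obtain N where N: "\<And>z. z \<in> brick e \<epsilon> \<Longrightarrow> norm (z - (\<Sum>k<N. coord e k z *\<^sub>R e k)) \<le> d / 3"
    using brick_approx_by_partial_sums[OF e tails, of "d / 3"] by auto
  have "(\<lambda>j. \<Sum>k<N. (coord e k (x j) - coord e k y) *\<^sub>R e k) \<longlonglongrightarrow> (\<Sum>k<N. (coord e k y - coord e k y) *\<^sub>R e k)"
    using coord by (intro tendsto_sum tendsto_scaleR tendsto_diff tendsto_const)
  then have "\<exists>j0. \<forall>j\<ge>j0. norm ((\<Sum>k<N. (coord e k (x j) - coord e k y) *\<^sub>R e k) - 0) < d / 3"
    using \<open>d > 0\<close> by (intro LIMSEQ_D) simp_all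
  then obtain j0 where j0: "\<And>j. j0 \<le> j \<Longrightarrow> norm (\<Sum>k<N. (coord e k (x j) - coord e k y) *\<^sub>R e k) < d / 3"
    by auto
  have "norm (x j - y) < d" if "j0 \<le> j" for j
  proof -
    let ?P = "\<lambda>z. \<Sum>k<N. coord e k z *\<^sub>R e k"
    let ?D = "\<Sum>k<N. (coord e k (x j) - coord e k y) *\<^sub>R e k"
    have "x j - y = (x j - ?P (x j)) + ?D - (y - ?P y)"
      by (simp add: scaleR_diff_left sum_subtractf algebra_simps)
    then have "norm (x j - y) \<le> norm ((x j - ?P (x j)) + ?D) + norm (y - ?P y)"
      by (simp only: norm_triangle_ineq4)
    also have "\<dots> \<le> norm (x j - ?P (x j)) + norm ?D + norm (y - ?P y)"
      using norm_triangle_ineq by simp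
    also have "\<dots> < d"
      using N[OF x[of j]] N[OF y] j0[OF that] by linarith
    finally show ?thesis .
  qed
  then show "\<exists>j0. \<forall>j\<ge>j0. norm (x j - y) < d"
    by blast
qed

lemma compact_brick:
  fixes e :: "nat \<Rightarrow> 'a::banach"
  assumes e: "schauder_basis e" and tails: "uniform_tails e {t. \<forall>n. \<bar>t n\<bar> \<le> \<epsilon> n}"
  shows "compact (brick e \<epsilon>)"
  unfolding compact_eq_seq_compact_metric
proof (rule seq_compactI)
  fix x :: "nat \<Rightarrow> 'a"
  assume x: "\<forall>j. x j \<in> brick e \<epsilon>"
  then obtain r a where r: "strict_mono r" and a: "\<And>n. \<bar>a n\<bar> \<le> \<epsilon> n"
    and lim: "\<And>n. (\<lambda>j. coord e n (x (r j))) \<longlonglongrightarrow> a n"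
    using convergent_subseq_if_abs_le[of "\<lambda>j n. coord e n (x j)" \<epsilon>] unfolding brick_def by blast
  have "summable (\<lambda>k. a k *\<^sub>R e k)"
    unfolding summable_Cauchy
  proof (intro allI impI)
    fix d :: real
    assume "d > 0"
    then have "d / 2 > 0"
      by simp
    then obtain N where "\<forall>t\<in>{t. \<forall>n. \<bar>t n\<bar> \<le> \<epsilon> n}. \<forall>m\<ge>N. \<forall>L. norm (\<Sum>k\<in>{m..<L}. t k *\<^sub>R e k) \<le> d / 2"
      using tails unfolding uniform_tails_def by blast
    then have "\<forall>m\<ge>N. \<forall>L. norm (\<Sum>k\<in>{m..<L}. a k *\<^sub>R e k) \<le> d / 2"
      using a by blast
    moreover have "d / 2 < d"
      using \<open>d > 0\<close> by simp
    ultimately show "\<exists>N. \<forall>m\<ge>N. \<forall>L. norm (\<Sum>k\<in>{m..<L}. a k *\<^sub>R e k) < d"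
      by (meson le_less_trans)
  qed
  then have "(\<lambda>k. a k *\<^sub>R e k) sums (\<Sum>k. a k *\<^sub>R e k)"
    by (rule summable_sums)
  then have coord_y: "coord e n (\<Sum>k. a k *\<^sub>R e k) = a n" for n
    by (rule coord_eqI[OF e])
  then have y: "(\<Sum>k. a k *\<^sub>R e k) \<in> brick e \<epsilon>"
    using a by (simp add: brick_def)
  have "(x \<circ> r) \<longlonglongrightarrow> (\<Sum>k. a k *\<^sub>R e k)"
  proof (rule tendsto_if_coord_tendsto_brick[OF e tails _ y])
    show "(x \<circ> r) j \<in> brick e \<epsilon>" for j
      using x by simp
    show "(\<lambda>j. coord e n ((x \<circ> r) j)) \<longlonglongrightarrow> coord e n (\<Sum>k. a k *\<^sub>R e k)" for n
      using lim[of n] by (simp add: coord_y)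
  qed
  with r y show "\<exists>l\<in>brick e \<epsilon>. \<exists>r. strict_mono r \<and> (x \<circ> r) \<longlonglongrightarrow> l"
    by blast
qed

theorem theorem3p5:
  fixes e :: "nat \<Rightarrow> 'a::banach" and \<epsilon> :: "nat \<Rightarrow> real"
  assumes "schauder_basis e"
    and "normalized_basis e"
    and "unconditional_basis e \<or> boundedly_complete e"
    and "\<And>n. \<epsilon> n \<ge> 0"
    and "extreme_radius (brick e \<epsilon>) < \<infinity>"
  shows "compact (brick e \<epsilon>)"
proof -
  have e_nonzero: "e n \<noteq> 0" for n
    using assms(2) unfolding normalized_basis_def by (metis norm_zero zero_neq_one)
  obtain x0 R where x0: "is_extreme_pt (brick e \<epsilon>) x0"
    and R: "\<And>x. is_extreme_pt (brick e \<epsilon>) x \<Longrightarrow> norm x \<le> R"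
    using extreme_radius_less_infinity_bounded[OF assms(5)] by blast
  have "\<bar>coord e n x0\<bar> = \<epsilon> n" for n
    by (rule coord_abs_eq_if_extreme_pt_brick[OF assms(1) e_nonzero x0])
  then have "uniform_tails e {t. \<forall>n. \<bar>t n\<bar> = \<epsilon> n}"
    using summable_sign_series[OF assms(1,3) _ R] by (intro uniform_tails_signs) blast
  then have "uniform_tails e {t. \<forall>n. \<bar>t n\<bar> \<le> \<epsilon> n}"
    by (rule uniform_tails_box_if_signs[OF assms(4)])
  then show ?thesis
    by (rule compact_brick[OF assms(1)])
qed

end
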